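(* For $n\ge1$ let $\ell_n=\Psi(L_n)$, $z_n=\Psi(Z_n)$, $h_n=\Psi(H_n)$, and set $\ell_0=z_0=h_0=1$. Let $L(x)=\sum_{n\ge0}\ell_nx^n$, $Z(x)=\sum_{n\ge0}z_nx^n$, $H(x)=\sum_{n\ge0}h_nx^n$. Then $$L(x)=\frac{1+x-x^3}{1-4x-x^4-x^5},$$ $$Z(x)=\frac{1+2x+4x^2+4x^3+6x^4+4x^5+x^6}{1-3x-x^2-6x^3-7x^4-7x^5-5x^6-x^7},$$ $$H(x)=\frac{1+4x+8x^2+8x^3+7x^4+4x^5+2x^6}{1-x-7x^2-12x^3-6x^4-7x^5-4x^6-2x^7}.$$
   Context: A matching of a graph is a set of pairwise vertex-disjoint edges; it is maximal if it is not a proper subset of another matching. $\Psi(G)$ is the number of maximal matchings of $G$. A benzenoid system is a connected plane graph without cut-vertices in which every bounded face is a hexagon, any two hexagonal faces being either disjoint or sharing exactly one edge (then they are adjacent). It is catacondensed if no vertex lies in three hexagons, and a benzenoid chain if moreover no hexagon is adjacent to three other hexagons; its length is its number of hexagons. In a chain, the two hexagons adjacent to only one other hexagon are terminal, the rest interior. An interior hexagon has exactly two vertices of degree 2; it is straight if these are non-adjacent and kinky if they are adjacent. $L_n$ (polyacene) is the benzenoid chain of length $n$ all of whose interior hexagons are straight. A polyphenacene is a benzenoid chain all of whose interior hexagons are kinky; $Z_n$ (zig-zag polyphenacene) is the one of length $n$ whose successive kinks turn alternately in opposite directions (the pairs of degree-2 vertices of consecutive interior hexagons lie alternately on opposite sides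 of the chain), and $H_n$ (helicene) is the one of length $n$ whose kinks all turn in the same direction (viewed as an abstract graph). For $n\le 2$ these three chains coincide. *)

theory Defs
  imports "HOL-Computational_Algebra.Computational_Algebra"
begin

text \<open>Graphs are given by their edge sets (edges are 2-element sets of vertices).
  A matching is a set of pairwise vertex-disjoint edges; it is maximal if it is
  not a proper subset of another matching.\<close>

definition matching :: "'a set set \<Rightarrow> 'a set set \<Rightarrow> bool" where
  "matching E M \<longleftrightarrow> M \<subseteq> E \<and> (\<forall>e\<in>M. \<forall>f\<in>M. e \<noteq> f \<longrightarrow> e \<inter> f = {})"

definition maximal_matching :: "'a set set \<Rightarrow> 'a set set \<Rightarrow> bool" where
  "maximal_matching E M \<longleftrightarrow> matching E M \<and> (\<forall>M'. matching E M' \<and> M \<subseteq> M' \<longrightarrow> M' = M)"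

definition Psi :: "'a set set \<Rightarrow> nat" where
  "Psi E = card {M. maximal_matching E M}"

text \<open>Hexagon i (i = 0,1,...) is glued
  onto the edge {a,b} where (a,b) = chain_att c i, and has new vertices
  4i+2, 4i+3, 4i+4, 4i+5 forming the cycle a, 4i+2, 4i+3, 4i+4, 4i+5, b.
  The next hexagon is glued onto the edge {4i+1+c i, 4i+2+c i}, with c i in {1,2,3}:
  c i = 2 is the edge opposite to {a,b} (hexagon i straight if interior),
  c i = 1 / c i = 3 give a kink to one side / the other side (orientation consistent).\<close>

fun chain_att :: "(nat \<Rightarrow> nat) \<Rightarrow> nat \<Rightarrow> nat \<times> nat" where
  "chain_att c 0 = (0, 1)"
| "chain_att c (Suc i) = (4*i + 1 + c i, 4*i + 2 + c i)"

definition hex_edges :: "(nat \<Rightarrow> nat) \<Rightarrow> nat \<Rightarrow> nat set set" where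
  "hex_edges c i = (case chain_att c i of (a, b) \<Rightarrow>
     {{a, 4*i+2}, {4*i+2, 4*i+3}, {4*i+3, 4*i+4}, {4*i+4, 4*i+5}, {4*i+5, b}, {a, b}})"

definition chain_edges :: "(nat \<Rightarrow> nat) \<Rightarrow> nat \<Rightarrow> nat set set" where
  "chain_edges c n = (\<Union>i<n. hex_edges c i)"

definition polyacene :: "nat \<Rightarrow> nat set set" where
  "polyacene n = chain_edges (\<lambda>_. 2) n"

definition zigzag :: "nat \<Rightarrow> nat set set" where
  "zigzag n = chain_edges (\<lambda>i. if even i then 1 else 3) n"

definition helicene :: "nat \<Rightarrow> nat set set" where
  "helicene n = chain_edges (\<lambda>_. 1) n"

definition ell :: "nat \<Rightarrow> nat" where "ell n = (if n = 0 then 1 else Psi (polyacene n))"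
definition zz :: "nat \<Rightarrow> nat" where "zz n = (if n = 0 then 1 else Psi (zigzag n))"
definition hh :: "nat \<Rightarrow> nat" where "hh n = (if n = 0 then 1 else Psi (helicene n))"

end

theory Submission
  imports Defs
begin

text \<open>Transfer-matrix method. The chain is built hexagon by hexagon, each new hexagon being glued
  onto an edge \<open>{a, b}\<close> of the previous one. A matching of the part built so far can still be
  completed to a maximal matching of the whole chain only if every edge with both ends uncovered
  contains \<open>a\<close> or \<open>b\<close>; such matchings are sorted by a boundary state (are \<open>a\<close>, \<open>b\<close> covered,
  is there an uncovered edge at \<open>a\<close> only, at \<open>b\<close> only). Gluing a hexagon acts linearly on the
  vector of counts per state, by a \<open>9 \<times> 9\<close> matrix that depends only on where the next hexagon is
  attached; for the zig-zag chain, exchanging \<open>a\<close> and \<open>b\<close> after every odd step makes this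
  matrix constant. The maximal matchings of the finished chain are counted by the final states.
  Each denominator annihilates the first few count vectors, hence by linearity all of them, and
  the numerator is read off from the first terms.\<close>

section \<open>Maximal matchings and boundary states\<close>

lemma maximal_matching_iff_dominating:
  assumes nonempty: "\<forall>e\<in>E. e \<noteq> {}"
  shows "maximal_matching E M \<longleftrightarrow> matching E M \<and> (\<forall>e\<in>E. e \<inter> \<Union>M \<noteq> {})"
proof
  assume max: "maximal_matching E M"
  then have M: "matching E M" unfolding maximal_matching_def by blast
  have "\<forall>e\<in>E. e \<inter> \<Union>M \<noteq> {}"
  proof (intro ballI notI)
    fix e assume e: "e \<in> E" and free: "e \<inter> \<Union>M = {}"
    then have "matching E (insert e M)" using M unfolding matching_def by blast
    then have "e \<in> M" using max unfolding maximal_matching_def by blast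
    then have "e \<subseteq> \<Union>M" by blast
    then show False using free nonempty e by blast
  qed
  with M show "matching E M \<and> (\<forall>e\<in>E. e \<inter> \<Union>M \<noteq> {})" ..
next
  assume H: "matching E M \<and> (\<forall>e\<in>E. e \<inter> \<Union>M \<noteq> {})"
  have "M' = M" if M': "matching E M'" "M \<subseteq> M'" for M'
  proof -
    have "f \<in> M" if f: "f \<in> M'" for f
    proof -
      have "f \<in> E" using f M'(1) unfolding matching_def by blast
      then have "f \<inter> \<Union>M \<noteq> {}" using H by blast
      then obtain g x where g: "g \<in> M" "x \<in> f" "x \<in> g" by blast
      then have "g \<in> M'" using M'(2) by blast
      then have "f = g" using M'(1) f g unfolding matching_def by blast
      with g show ?thesis by simp
    qed
    with M'(2) show ?thesis by blast
  qed
  with H show "maximal_matching E M" unfolding maximal_matching_def by blast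
qed

lemma matching_Un_iff:
  assumes "A \<inter> B = {}"
  shows "matching E (A \<union> B) \<longleftrightarrow> matching E A \<and> matching E B \<and> \<Union>A \<inter> \<Union>B = {}"
proof
  assume m: "matching E (A \<union> B)"
  have "\<Union>A \<inter> \<Union>B = {}"
  proof (rule equals0I)
    fix x assume "x \<in> \<Union>A \<inter> \<Union>B"
    then obtain e f where ef: "e \<in> A" "f \<in> B" "x \<in> e" "x \<in> f" by blast
    then have "e \<noteq> f" using assms by blast
    then have "e \<inter> f = {}" using m ef(1,2) unfolding matching_def by blast
    with ef(3,4) show False by blast
  qed
  with m show "matching E A \<and> matching E B \<and> \<Union>A \<inter> \<Union>B = {}"
    unfolding matching_def by blast
next
  assume H: "matching E A \<and> matching E B \<and> \<Union>A \<inter> \<Union>B = {}"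
  then have A: "matching E A" and B: "matching E B" and AB: "\<Union>A \<inter> \<Union>B = {}" by auto
  have cross: "e \<inter> f = {}" if "e \<in> A" "f \<in> B" for e f
    using AB that by blast
  show "matching E (A \<union> B)" unfolding matching_def
  proof (intro conjI ballI impI)
    show "A \<union> B \<subseteq> E" using A B unfolding matching_def by blast
    fix e f assume e: "e \<in> A \<union> B" and f: "f \<in> A \<union> B" and ne: "e \<noteq> f"
    consider "e \<in> A" "f \<in> A" | "e \<in> B" "f \<in> B" | "e \<in> A" "f \<in> B" | "e \<in> B" "f \<in> A"
      using e f by blast
    then show "e \<inter> f = {}"
    proof cases
      case 1 with A ne show ?thesis unfolding matching_def by blast
    next
      case 2 with B ne show ?thesis unfolding matching_def by blast
    next
      case 3 then show ?thesis by (rule cross)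
    next
      case 4 then show ?thesis using cross[of f e] by blast
    qed
  qed
qed

text \<open>An edge is \<^emph>\<open>free\<close> for \<open>M\<close> if both its ends are uncovered. Later hexagons only meet
  the current graph in the attachment edge \<open>{a, b}\<close>, so a free edge must contain \<open>a\<close> or \<open>b\<close>.\<close>

definition admissible :: "'a set set \<Rightarrow> 'a \<Rightarrow> 'a \<Rightarrow> 'a set set \<Rightarrow> bool" where
  "admissible E a b M \<longleftrightarrow> matching E M \<and> (\<forall>e\<in>E. e \<inter> \<Union>M = {} \<longrightarrow> a \<in> e \<or> b \<in> e)"

type_synonym boundary = "bool \<times> bool \<times> bool \<times> bool"

definition boundary_state :: "'a set set \<Rightarrow> 'a \<Rightarrow> 'a \<Rightarrow> 'a set set \<Rightarrow> boundary" where
  "boundary_state E a b M =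
     (a \<in> \<Union>M, b \<in> \<Union>M,
      \<exists>e\<in>E. e \<inter> \<Union>M = {} \<and> a \<in> e \<and> b \<notin> e,
      \<exists>e\<in>E. e \<inter> \<Union>M = {} \<and> b \<in> e \<and> a \<notin> e)"

definition state_count :: "'a set set \<Rightarrow> 'a \<Rightarrow> 'a \<Rightarrow> boundary \<Rightarrow> nat" where
  "state_count E a b s = card {M. admissible E a b M \<and> boundary_state E a b M = s}"

fun consistent :: "boundary \<Rightarrow> bool" where
  "consistent (al, be, da, db) \<longleftrightarrow> \<not> (al \<and> da) \<and> \<not> (be \<and> db)"

fun final :: "boundary \<Rightarrow> bool" where
  "final (al, be, da, db) \<longleftrightarrow> (al \<or> be) \<and> \<not> da \<and> \<not> db"

lemma consistent_boundary_state: "consistent (boundary_state E a b M)"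
  unfolding boundary_state_def by auto

lemma state_count_inconsistent: "\<not> consistent s \<Longrightarrow> state_count E a b s = 0"
  unfolding state_count_def using consistent_boundary_state by (metis (mono_tags) Collect_empty_eq card.empty)

lemma sum_restrict_consistent:
  "(\<Sum>s\<in>UNIV. f s * state_count F x y s) = (\<Sum>s | consistent s. f s * state_count F x y s)"
  by (rule sum.mono_neutral_right) (auto simp: state_count_inconsistent)

lemma admissible_subset: "admissible E a b M \<Longrightarrow> M \<subseteq> E"
  unfolding admissible_def matching_def by blast

lemma finite_admissible: "finite E \<Longrightarrow> finite {M. admissible E a b M \<and> R M}"
  by (rule finite_subset[of _ "Pow E"]) (auto dest: admissible_subset)

lemma card_admissible_by_state:
  assumes "finite E"
  shows "card {M. admissible E a b M \<and> R (boundary_state E a b M)} = (\<Sum>s | R s. state_count E a b s)"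
proof -
  have "{M. admissible E a b M \<and> R (boundary_state E a b M)}
      = (\<Union>s\<in>{s. R s}. {M. admissible E a b M \<and> boundary_state E a b M = s})" by auto
  then show ?thesis
    unfolding state_count_def
    by (simp only:) (rule card_UN_disjoint; auto intro: finite_admissible[OF assms])
qed

lemma maximal_matching_iff_admissible_final:
  assumes ab: "{a, b} \<in> E" and nonempty: "\<forall>e\<in>E. e \<noteq> {}"
  shows "maximal_matching E M \<longleftrightarrow> admissible E a b M \<and> final (boundary_state E a b M)"
proof -
  have dominated: "(\<forall>e\<in>E. e \<inter> \<Union>M \<noteq> {}) \<longleftrightarrow>
      (\<forall>e\<in>E. e \<inter> \<Union>M = {} \<longrightarrow> a \<in> e \<or> b \<in> e) \<and> final (boundary_state E a b M)"
  proof
    assume dom: "\<forall>e\<in>E. e \<inter> \<Union>M \<noteq> {}"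
    then have "{a, b} \<inter> \<Union>M \<noteq> {}" using ab by blast
    then have "a \<in> \<Union>M \<or> b \<in> \<Union>M" by blast
    moreover have "boundary_state E a b M = (a \<in> \<Union>M, b \<in> \<Union>M, False, False)"
      using dom by (simp add: boundary_state_def)
    ultimately show "(\<forall>e\<in>E. e \<inter> \<Union>M = {} \<longrightarrow> a \<in> e \<or> b \<in> e) \<and> final (boundary_state E a b M)"
      using dom by simp
  next
    assume H: "(\<forall>e\<in>E. e \<inter> \<Union>M = {} \<longrightarrow> a \<in> e \<or> b \<in> e) \<and> final (boundary_state E a b M)"
    then have covered: "a \<in> \<Union>M \<or> b \<in> \<Union>M"
      and no_a: "\<not> (\<exists>e\<in>E. e \<inter> \<Union>M = {} \<and> a \<in> e \<and> b \<notin> e)"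
      and no_b: "\<not> (\<exists>e\<in>E. e \<inter> \<Union>M = {} \<and> b \<in> e \<and> a \<notin> e)"
      by (simp_all add: boundary_state_def)
    show "\<forall>e\<in>E. e \<inter> \<Union>M \<noteq> {}"
    proof (intro ballI notI)
      fix e assume e: "e \<in> E" and free: "e \<inter> \<Union>M = {}"
      have "a \<in> e \<or> b \<in> e" using H e free by simp
      moreover have "\<not> (a \<in> e \<and> b \<in> e)" using covered free by blast
      moreover have "a \<notin> e \<or> b \<in> e" using no_a e free by simp
      moreover have "b \<notin> e \<or> a \<in> e" using no_b e free by simp
      ultimately show False by blast
    qed
  qed
  show ?thesis
    unfolding maximal_matching_iff_dominating[OF nonempty] admissible_def dominated by (rule conj_assoc[symmetric])
qed

lemma Psi_eq_sum_final:
  assumes "finite E" "{a, b} \<in> E" "\<forall>e\<in>E. e \<noteq> {}"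
  shows "Psi E = (\<Sum>s | final s. state_count E a b s)"
  unfolding Psi_def maximal_matching_iff_admissible_final[OF assms(2,3)]
  using card_admissible_by_state[OF assms(1)] .

section \<open>Gluing a hexagon\<close>

type_synonym path_choice = "bool \<times> bool \<times> bool \<times> bool \<times> bool"

text \<open>A hexagon glued onto the edge \<open>{a, b}\<close> adds the path \<open>a, u\<^sub>1, u\<^sub>2, u\<^sub>3, u\<^sub>4, b\<close>,
  whose vertices we number \<open>0, \<dots>, 5\<close>; path edge \<open>k\<close> (\<open>1 \<le> k \<le> 5\<close>) joins vertices
  \<open>k - 1\<close> and \<open>k\<close>. A \<open>path_choice\<close> records which path edges enter the matching, and the
  next hexagon is glued onto path edge \<open>c + 1\<close>.\<close>

fun chosen_path_edges :: "'a \<Rightarrow> 'a \<Rightarrow> 'a \<Rightarrow> 'a \<Rightarrow> 'a \<Rightarrow> 'a \<Rightarrow> path_choice \<Rightarrow> 'a set set" where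
  "chosen_path_edges a u1 u2 u3 u4 b (q1, q2, q3, q4, q5) =
     {e. (q1 \<and> e = {a, u1}) \<or> (q2 \<and> e = {u1, u2}) \<or> (q3 \<and> e = {u2, u3})
       \<or> (q4 \<and> e = {u3, u4}) \<or> (q5 \<and> e = {u4, b})}"

fun path_cover :: "boundary \<Rightarrow> path_choice \<Rightarrow> bool list" where
  "path_cover (al, be, da, db) (q1, q2, q3, q4, q5) =
     [al \<or> q1, q1 \<or> q2, q2 \<or> q3, q3 \<or> q4, q4 \<or> q5, be \<or> q5]"

definition free_path_edge :: "boundary \<Rightarrow> path_choice \<Rightarrow> nat \<Rightarrow> bool" where
  "free_path_edge s q k \<longleftrightarrow> \<not> path_cover s q ! (k - 1) \<and> \<not> path_cover s q ! k"

text \<open>The vertices \<open>a\<close> and \<open>b\<close> lie on no later hexagon, so every free edge at them must be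
  dominated by the new path; a free path edge must touch the next attachment edge.\<close>

fun compatible :: "nat \<Rightarrow> boundary \<Rightarrow> path_choice \<Rightarrow> bool" where
  "compatible c (al, be, da, db) (q1, q2, q3, q4, q5) \<longleftrightarrow>
     \<not> (q1 \<and> q2) \<and> \<not> (q2 \<and> q3) \<and> \<not> (q3 \<and> q4) \<and> \<not> (q4 \<and> q5) \<and> \<not> (al \<and> q1) \<and> \<not> (be \<and> q5)
     \<and> (da \<longrightarrow> q1) \<and> (db \<longrightarrow> q5) \<and> (\<not> al \<and> \<not> be \<longrightarrow> q1 \<or> q5)
     \<and> (free_path_edge (al, be, da, db) (q1, q2, q3, q4, q5) 1 \<longrightarrow> 1 \<in> {c, c + 1, c + 2})
     \<and> (free_path_edge (al, be, da, db) (q1, q2, q3, q4, q5) 2 \<longrightarrow> 2 \<in> {c, c + 1, c + 2})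
     \<and> (free_path_edge (al, be, da, db) (q1, q2, q3, q4, q5) 3 \<longrightarrow> 3 \<in> {c, c + 1, c + 2})
     \<and> (free_path_edge (al, be, da, db) (q1, q2, q3, q4, q5) 4 \<longrightarrow> 4 \<in> {c, c + 1, c + 2})
     \<and> (free_path_edge (al, be, da, db) (q1, q2, q3, q4, q5) 5 \<longrightarrow> 5 \<in> {c, c + 1, c + 2})"

definition next_state :: "nat \<Rightarrow> boundary \<Rightarrow> path_choice \<Rightarrow> boundary" where
  "next_state c s q =
     (path_cover s q ! c, path_cover s q ! (c + 1), free_path_edge s q c, free_path_edge s q (c + 2))"

definition transfer :: "nat \<Rightarrow> boundary \<Rightarrow> boundary \<Rightarrow> nat" where
  "transfer c s' s = card {q. compatible c s q \<and> next_state c s q = s'}"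

locale hexagon_gluing =
  fixes E :: "'a set set" and a b u1 u2 u3 u4 :: 'a
  assumes finite_E: "finite E" and ab_in_E: "{a, b} \<in> E"
    and distinct_vertices: "distinct [a, b, u1, u2, u3, u4]"
    and fresh: "u1 \<notin> \<Union>E" "u2 \<notin> \<Union>E" "u3 \<notin> \<Union>E" "u4 \<notin> \<Union>E"
begin

definition "path_edges = {{a, u1}, {u1, u2}, {u2, u3}, {u3, u4}, {u4, b}}"
definition "glued = E \<union> path_edges"
definition "path_vertices = [a, u1, u2, u3, u4, b]"

abbreviation "chosen \<equiv> chosen_path_edges a u1 u2 u3 u4 b"

lemma vertices_neq:
  "a \<noteq> b" "a \<noteq> u1" "a \<noteq> u2" "a \<noteq> u3" "a \<noteq> u4" "b \<noteq> u1" "b \<noteq> u2" "b \<noteq> u3" "b \<noteq> u4"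
  "u1 \<noteq> u2" "u1 \<noteq> u3" "u1 \<noteq> u4" "u2 \<noteq> u3" "u2 \<noteq> u4" "u3 \<noteq> u4"
  using distinct_vertices by auto

lemma fresh_edge: "e \<in> E \<Longrightarrow> u1 \<notin> e \<and> u2 \<notin> e \<and> u3 \<notin> e \<and> u4 \<notin> e"
  using fresh by auto

lemma chosen_subset: "chosen q \<subseteq> path_edges"
  by (cases q) (auto simp: path_edges_def)

lemma chosen_disjoint: "chosen q \<inter> E = {}"
  using chosen_subset fresh_edge unfolding path_edges_def by blast

lemma Union_chosen: "\<Union>(chosen (q1, q2, q3, q4, q5)) =
    (if q1 then {a, u1} else {}) \<union> (if q2 then {u1, u2} else {}) \<union> (if q3 then {u2, u3} else {})
    \<union> (if q4 then {u3, u4} else {}) \<union> (if q5 then {u4, b} else {})"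
  by auto

lemma covered_glued:
  assumes "M \<subseteq> E"
  shows "u1 \<in> \<Union>(M \<union> chosen (q1, q2, q3, q4, q5)) \<longleftrightarrow> q1 \<or> q2"
    "u2 \<in> \<Union>(M \<union> chosen (q1, q2, q3, q4, q5)) \<longleftrightarrow> q2 \<or> q3"
    "u3 \<in> \<Union>(M \<union> chosen (q1, q2, q3, q4, q5)) \<longleftrightarrow> q3 \<or> q4"
    "u4 \<in> \<Union>(M \<union> chosen (q1, q2, q3, q4, q5)) \<longleftrightarrow> q4 \<or> q5"
    "a \<in> \<Union>(M \<union> chosen (q1, q2, q3, q4, q5)) \<longleftrightarrow> a \<in> \<Union>M \<or> q1"
    "b \<in> \<Union>(M \<union> chosen (q1, q2, q3, q4, q5)) \<longleftrightarrow> b \<in> \<Union>M \<or> q5"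
  using assms fresh_edge vertices_neq unfolding Union_Un_distrib Union_chosen by auto

lemma matching_chosen_iff:
  "matching glued (chosen (q1, q2, q3, q4, q5)) \<longleftrightarrow>
     \<not> (q1 \<and> q2) \<and> \<not> (q2 \<and> q3) \<and> \<not> (q3 \<and> q4) \<and> \<not> (q4 \<and> q5)"
proof
  assume m: "matching glued (chosen (q1, q2, q3, q4, q5))"
  have clash: False if "e \<in> chosen (q1, q2, q3, q4, q5)" "f \<in> chosen (q1, q2, q3, q4, q5)"
    "e \<noteq> f" "x \<in> e" "x \<in> f" for e f x
    using m that unfolding matching_def by blast
  show "\<not> (q1 \<and> q2) \<and> \<not> (q2 \<and> q3) \<and> \<not> (q3 \<and> q4) \<and> \<not> (q4 \<and> q5)"
    using clash[of "{a, u1}" "{u1, u2}" u1] clash[of "{u1, u2}" "{u2, u3}" u2]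
      clash[of "{u2, u3}" "{u3, u4}" u3] clash[of "{u3, u4}" "{u4, b}" u4] vertices_neq
    by (auto simp: doubleton_eq_iff)
next
  assume H: "\<not> (q1 \<and> q2) \<and> \<not> (q2 \<and> q3) \<and> \<not> (q3 \<and> q4) \<and> \<not> (q4 \<and> q5)"
  have "e = f" if "e \<in> chosen (q1, q2, q3, q4, q5)" "f \<in> chosen (q1, q2, q3, q4, q5)"
    "x \<in> e" "x \<in> f" for e f x
    using H that vertices_neq by auto
  then show "matching glued (chosen (q1, q2, q3, q4, q5))"
    using chosen_subset unfolding matching_def glued_def by blast
qed

lemma matching_glued_iff:
  assumes M: "M \<subseteq> E"
  shows "matching glued (M \<union> chosen (q1, q2, q3, q4, q5)) \<longleftrightarrow> matching E M
     \<and> \<not> (q1 \<and> q2) \<and> \<not> (q2 \<and> q3) \<and> \<not> (q3 \<and> q4) \<and> \<not> (q4 \<and> q5)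
     \<and> \<not> (a \<in> \<Union>M \<and> q1) \<and> \<not> (b \<in> \<Union>M \<and> q5)"
proof -
  have disjoint: "M \<inter> chosen (q1, q2, q3, q4, q5) = {}"
    using M chosen_disjoint by blast
  have "matching glued M \<longleftrightarrow> matching E M"
    using M unfolding matching_def glued_def by blast
  moreover have "u1 \<notin> \<Union>M" "u2 \<notin> \<Union>M" "u3 \<notin> \<Union>M" "u4 \<notin> \<Union>M"
    using M fresh by blast+
  then have "\<Union>M \<inter> \<Union>(chosen (q1, q2, q3, q4, q5)) = {} \<longleftrightarrow>
      \<not> (a \<in> \<Union>M \<and> q1) \<and> \<not> (b \<in> \<Union>M \<and> q5)"
    unfolding Union_chosen by auto
  ultimately show ?thesis
    unfolding matching_Un_iff[OF disjoint] matching_chosen_iff by blast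
qed

lemma free_edge_glued:
  assumes M: "M \<subseteq> E" and e: "e \<in> E"
  shows "e \<inter> \<Union>(M \<union> chosen (q1, q2, q3, q4, q5)) = {} \<longleftrightarrow>
    e \<inter> \<Union>M = {} \<and> \<not> (q1 \<and> a \<in> e) \<and> \<not> (q5 \<and> b \<in> e)"
proof -
  have "u1 \<notin> e" "u2 \<notin> e" "u3 \<notin> e" "u4 \<notin> e" using fresh_edge e by auto
  then show ?thesis unfolding Union_Un_distrib Union_chosen by auto
qed

lemma old_edges_dominated_iff:
  assumes s: "boundary_state E a b M = (al, be, da, db)"
  shows "(\<forall>e\<in>E. e \<inter> \<Union>M = {} \<longrightarrow> (q1 \<and> a \<in> e) \<or> (q5 \<and> b \<in> e)) \<longleftrightarrow>
     (\<forall>e\<in>E. e \<inter> \<Union>M = {} \<longrightarrow> a \<in> e \<or> b \<in> e)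
     \<and> (da \<longrightarrow> q1) \<and> (db \<longrightarrow> q5) \<and> (\<not> al \<and> \<not> be \<longrightarrow> q1 \<or> q5)"
proof -
  have al: "al = (a \<in> \<Union>M)" and be: "be = (b \<in> \<Union>M)"
    and da: "da = (\<exists>e\<in>E. e \<inter> \<Union>M = {} \<and> a \<in> e \<and> b \<notin> e)"
    and db: "db = (\<exists>e\<in>E. e \<inter> \<Union>M = {} \<and> b \<in> e \<and> a \<notin> e)"
    using s unfolding boundary_state_def by auto
  have ab_free: "{a, b} \<inter> \<Union>M = {} \<longleftrightarrow> \<not> al \<and> \<not> be" using al be by auto
  show ?thesis
  proof
    assume H: "\<forall>e\<in>E. e \<inter> \<Union>M = {} \<longrightarrow> (q1 \<and> a \<in> e) \<or> (q5 \<and> b \<in> e)"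
    have "\<not> al \<and> \<not> be \<longrightarrow> q1 \<or> q5" using H ab_in_E ab_free by blast
    moreover have "da \<longrightarrow> q1" "db \<longrightarrow> q5" using H unfolding da db by blast+
    moreover have "\<forall>e\<in>E. e \<inter> \<Union>M = {} \<longrightarrow> a \<in> e \<or> b \<in> e" using H by blast
    ultimately show "(\<forall>e\<in>E. e \<inter> \<Union>M = {} \<longrightarrow> a \<in> e \<or> b \<in> e)
      \<and> (da \<longrightarrow> q1) \<and> (db \<longrightarrow> q5) \<and> (\<not> al \<and> \<not> be \<longrightarrow> q1 \<or> q5)" by blast
  next
    assume H: "(\<forall>e\<in>E. e \<inter> \<Union>M = {} \<longrightarrow> a \<in> e \<or> b \<in> e)
      \<and> (da \<longrightarrow> q1) \<and> (db \<longrightarrow> q5) \<and> (\<not> al \<and> \<not> be \<longrightarrow> q1 \<or> q5)"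
    show "\<forall>e\<in>E. e \<inter> \<Union>M = {} \<longrightarrow> (q1 \<and> a \<in> e) \<or> (q5 \<and> b \<in> e)"
    proof (intro ballI impI)
      fix e assume e: "e \<in> E" and free: "e \<inter> \<Union>M = {}"
      have "a \<in> e \<or> b \<in> e" using H e free by blast
      moreover have "a \<in> e \<Longrightarrow> b \<notin> e \<Longrightarrow> q1" using H e free unfolding da by blast
      moreover have "b \<in> e \<Longrightarrow> a \<notin> e \<Longrightarrow> q5" using H e free unfolding db by blast
      moreover have "a \<in> e \<Longrightarrow> b \<in> e \<Longrightarrow> q1 \<or> q5" using H e free al be by blast
      ultimately show "(q1 \<and> a \<in> e) \<or> (q5 \<and> b \<in> e)" by blast
    qed
  qed
qed

lemma ball_glued:
  "(\<forall>e\<in>glued. R e) \<longleftrightarrow> (\<forall>e\<in>E. R e) \<and> R {a, u1} \<and> R {u1, u2} \<and> R {u2, u3} \<and> R {u3, u4} \<and> R {u4, b}"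
  unfolding glued_def path_edges_def by auto

lemma bex_glued:
  "(\<exists>e\<in>glued. R e) \<longleftrightarrow> (\<exists>e\<in>E. R e) \<or> R {a, u1} \<or> R {u1, u2} \<or> R {u2, u3} \<or> R {u3, u4} \<or> R {u4, b}"
  unfolding glued_def path_edges_def by auto

lemma doubleton_disjoint_iff: "{x, y} \<inter> U = {} \<longleftrightarrow> x \<notin> U \<and> y \<notin> U"
  by auto

lemma admissible_glued_iff:
  assumes M: "M \<subseteq> E" and s: "boundary_state E a b M = (al, be, da, db)"
    and a': "a' \<notin> \<Union>E" and b': "b' \<notin> \<Union>E"
  shows "admissible glued a' b' (M \<union> chosen (q1, q2, q3, q4, q5)) \<longleftrightarrow> admissible E a b M
     \<and> \<not> (q1 \<and> q2) \<and> \<not> (q2 \<and> q3) \<and> \<not> (q3 \<and> q4) \<and> \<not> (q4 \<and> q5)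
     \<and> \<not> (al \<and> q1) \<and> \<not> (be \<and> q5) \<and> (da \<longrightarrow> q1) \<and> (db \<longrightarrow> q5) \<and> (\<not> al \<and> \<not> be \<longrightarrow> q1 \<or> q5)
     \<and> (\<not> (al \<or> q1) \<and> \<not> (q1 \<or> q2) \<longrightarrow> a' \<in> {a, u1} \<or> b' \<in> {a, u1})
     \<and> (\<not> (q1 \<or> q2) \<and> \<not> (q2 \<or> q3) \<longrightarrow> a' \<in> {u1, u2} \<or> b' \<in> {u1, u2})
     \<and> (\<not> (q2 \<or> q3) \<and> \<not> (q3 \<or> q4) \<longrightarrow> a' \<in> {u2, u3} \<or> b' \<in> {u2, u3})
     \<and> (\<not> (q3 \<or> q4) \<and> \<not> (q4 \<or> q5) \<longrightarrow> a' \<in> {u3, u4} \<or> b' \<in> {u3, u4})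
     \<and> (\<not> (q4 \<or> q5) \<and> \<not> (be \<or> q5) \<longrightarrow> a' \<in> {u4, b} \<or> b' \<in> {u4, b})"
    (is "_ \<longleftrightarrow> ?rhs")
proof -
  have al: "al = (a \<in> \<Union>M)" and be: "be = (b \<in> \<Union>M)"
    using s unfolding boundary_state_def by auto
  have "(e \<inter> \<Union>(M \<union> chosen (q1, q2, q3, q4, q5)) = {} \<longrightarrow> a' \<in> e \<or> b' \<in> e) \<longleftrightarrow>
      (e \<inter> \<Union>M = {} \<longrightarrow> (q1 \<and> a \<in> e) \<or> (q5 \<and> b \<in> e))" if e: "e \<in> E" for e
  proof -
    have "a' \<notin> e" "b' \<notin> e" using a' b' e by auto
    then show ?thesis using free_edge_glued[OF M e] by simp
  qed
  then have old: "(\<forall>e\<in>E. e \<inter> \<Union>(M \<union> chosen (q1, q2, q3, q4, q5)) = {} \<longrightarrow> a' \<in> e \<or> b' \<in> e) \<longleftrightarrow>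
      (\<forall>e\<in>E. e \<inter> \<Union>M = {} \<longrightarrow> (q1 \<and> a \<in> e) \<or> (q5 \<and> b \<in> e))"
    by (rule ball_cong[OF refl])
  have "admissible glued a' b' (M \<union> chosen (q1, q2, q3, q4, q5)) \<longleftrightarrow>
      matching glued (M \<union> chosen (q1, q2, q3, q4, q5)) \<and>
      (\<forall>e\<in>E. e \<inter> \<Union>(M \<union> chosen (q1, q2, q3, q4, q5)) = {} \<longrightarrow> a' \<in> e \<or> b' \<in> e) \<and>
      (\<not> (al \<or> q1) \<and> \<not> (q1 \<or> q2) \<longrightarrow> a' \<in> {a, u1} \<or> b' \<in> {a, u1})
     \<and> (\<not> (q1 \<or> q2) \<and> \<not> (q2 \<or> q3) \<longrightarrow> a' \<in> {u1, u2} \<or> b' \<in> {u1, u2})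
     \<and> (\<not> (q2 \<or> q3) \<and> \<not> (q3 \<or> q4) \<longrightarrow> a' \<in> {u2, u3} \<or> b' \<in> {u2, u3})
     \<and> (\<not> (q3 \<or> q4) \<and> \<not> (q4 \<or> q5) \<longrightarrow> a' \<in> {u3, u4} \<or> b' \<in> {u3, u4})
     \<and> (\<not> (q4 \<or> q5) \<and> \<not> (be \<or> q5) \<longrightarrow> a' \<in> {u4, b} \<or> b' \<in> {u4, b})"
    unfolding admissible_def ball_glued doubleton_disjoint_iff covered_glued[OF M] al be by blast
  also have "\<dots> \<longleftrightarrow> ?rhs"
    unfolding old old_edges_dominated_iff[OF s] matching_glued_iff[OF M] admissible_def al be by argo
  finally show ?thesis .
qed

lemma boundary_state_glued:
  assumes M: "M \<subseteq> E" and s: "boundary_state E a b M = (al, be, da, db)"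
    and a': "a' \<notin> \<Union>E" and b': "b' \<notin> \<Union>E"
  shows "boundary_state glued a' b' (M \<union> chosen (q1, q2, q3, q4, q5)) =
    (a' \<in> \<Union>(M \<union> chosen (q1, q2, q3, q4, q5)), b' \<in> \<Union>(M \<union> chosen (q1, q2, q3, q4, q5)),
     (\<not> (al \<or> q1) \<and> \<not> (q1 \<or> q2) \<and> a' \<in> {a, u1} \<and> b' \<notin> {a, u1}) \<or>
     (\<not> (q1 \<or> q2) \<and> \<not> (q2 \<or> q3) \<and> a' \<in> {u1, u2} \<and> b' \<notin> {u1, u2}) \<or>
     (\<not> (q2 \<or> q3) \<and> \<not> (q3 \<or> q4) \<and> a' \<in> {u2, u3} \<and> b' \<notin> {u2, u3}) \<or>
     (\<not> (q3 \<or> q4) \<and> \<not> (q4 \<or> q5) \<and> a' \<in> {u3, u4} \<and> b' \<notin> {u3, u4}) \<or>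
     (\<not> (q4 \<or> q5) \<and> \<not> (be \<or> q5) \<and> a' \<in> {u4, b} \<and> b' \<notin> {u4, b}),
     (\<not> (al \<or> q1) \<and> \<not> (q1 \<or> q2) \<and> b' \<in> {a, u1} \<and> a' \<notin> {a, u1}) \<or>
     (\<not> (q1 \<or> q2) \<and> \<not> (q2 \<or> q3) \<and> b' \<in> {u1, u2} \<and> a' \<notin> {u1, u2}) \<or>
     (\<not> (q2 \<or> q3) \<and> \<not> (q3 \<or> q4) \<and> b' \<in> {u2, u3} \<and> a' \<notin> {u2, u3}) \<or>
     (\<not> (q3 \<or> q4) \<and> \<not> (q4 \<or> q5) \<and> b' \<in> {u3, u4} \<and> a' \<notin> {u3, u4}) \<or>
     (\<not> (q4 \<or> q5) \<and> \<not> (be \<or> q5) \<and> b' \<in> {u4, b} \<and> a' \<notin> {u4, b}))"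
proof -
  have al: "al = (a \<in> \<Union>M)" and be: "be = (b \<in> \<Union>M)"
    using s unfolding boundary_state_def by auto
  have "\<not> (\<exists>e\<in>E. e \<inter> \<Union>(M \<union> chosen (q1, q2, q3, q4, q5)) = {} \<and> a' \<in> e \<and> b' \<notin> e)"
    "\<not> (\<exists>e\<in>E. e \<inter> \<Union>(M \<union> chosen (q1, q2, q3, q4, q5)) = {} \<and> b' \<in> e \<and> a' \<notin> e)"
    using a' b' by blast+
  then show ?thesis
    unfolding boundary_state_def bex_glued doubleton_disjoint_iff covered_glued[OF M] al be prod.inject
    by argo
qed

lemma glued_state_iff:
  assumes c: "c \<in> {1, 2, 3}" and M: "M \<subseteq> E"
  shows "admissible glued (path_vertices ! c) (path_vertices ! (c + 1)) (M \<union> chosen q)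
      \<and> boundary_state glued (path_vertices ! c) (path_vertices ! (c + 1)) (M \<union> chosen q) = s'
    \<longleftrightarrow> admissible E a b M \<and> compatible c (boundary_state E a b M) q
      \<and> next_state c (boundary_state E a b M) q = s'"
proof -
  obtain al be da db where s: "boundary_state E a b M = (al, be, da, db)"
    by (cases "boundary_state E a b M") auto
  obtain q1 q2 q3 q4 q5 where q: "q = (q1, q2, q3, q4, q5)" by (cases q) auto
  obtain x1 x2 x3 x4 where s': "s' = (x1, x2, x3, x4)" by (cases s') auto
  note neq = vertices_neq vertices_neq[symmetric]
  note covered = covered_glued[OF M]
  from c consider "c = 1" | "c = 2" | "c = 3" by auto
  then show ?thesis
  proof cases
    case 1
    then have v: "path_vertices ! c = u1" "path_vertices ! (c + 1) = u2"
      by (simp_all add: path_vertices_def)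
    show ?thesis
      unfolding v q admissible_glued_iff[OF M s fresh(1) fresh(2)]
        boundary_state_glued[OF M s fresh(1) fresh(2)] covered s s' using neq
      by (simp add: 1 next_state_def free_path_edge_def del: chosen_path_edges.simps)
  next
    case 2
    then have v: "path_vertices ! c = u2" "path_vertices ! (c + 1) = u3"
      by (simp_all add: path_vertices_def)
    show ?thesis
      unfolding v q admissible_glued_iff[OF M s fresh(2) fresh(3)]
        boundary_state_glued[OF M s fresh(2) fresh(3)] covered s s' using neq
      by (simp add: 2 next_state_def free_path_edge_def del: chosen_path_edges.simps)
  next
    case 3
    then have v: "path_vertices ! c = u3" "path_vertices ! (c + 1) = u4"
      by (simp_all add: path_vertices_def)
    show ?thesis
      unfolding v q admissible_glued_iff[OF M s fresh(3) fresh(4)]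
        boundary_state_glued[OF M s fresh(3) fresh(4)] covered s s' using neq
      by (simp add: 3 next_state_def free_path_edge_def del: chosen_path_edges.simps)
  qed
qed

lemma chosen_inj: "chosen q = chosen q' \<Longrightarrow> q = q'"
proof -
  assume eq: "chosen q = chosen q'"
  obtain q1 q2 q3 q4 q5 where q: "q = (q1, q2, q3, q4, q5)" by (cases q) auto
  obtain p1 p2 p3 p4 p5 where q': "q' = (p1, p2, p3, p4, p5)" by (cases q') auto
  have mem: "{a, u1} \<in> chosen (x1, x2, x3, x4, x5) \<longleftrightarrow> x1"
    "{u1, u2} \<in> chosen (x1, x2, x3, x4, x5) \<longleftrightarrow> x2"
    "{u2, u3} \<in> chosen (x1, x2, x3, x4, x5) \<longleftrightarrow> x3"
    "{u3, u4} \<in> chosen (x1, x2, x3, x4, x5) \<longleftrightarrow> x4"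
    "{u4, b} \<in> chosen (x1, x2, x3, x4, x5) \<longleftrightarrow> x5" for x1 x2 x3 x4 x5
    using vertices_neq by (auto simp: doubleton_eq_iff)
  show "q = q'"
    using eq mem[of q1 q2 q3 q4 q5] mem[of p1 p2 p3 p4 p5] unfolding q q' by simp
qed

lemma decompose_glued:
  assumes "M' \<subseteq> glued"
  shows "M' = (M' \<inter> E) \<union> chosen ({a, u1} \<in> M', {u1, u2} \<in> M', {u2, u3} \<in> M', {u3, u4} \<in> M', {u4, b} \<in> M')"
proof -
  have "chosen ({a, u1} \<in> M', {u1, u2} \<in> M', {u2, u3} \<in> M', {u3, u4} \<in> M', {u4, b} \<in> M')
      = M' \<inter> path_edges"
    unfolding path_edges_def chosen_path_edges.simps by (rule set_eqI) (simp, metis)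
  with assms show ?thesis unfolding glued_def by blast
qed

lemma glued_states_eq:
  assumes c: "c \<in> {1, 2, 3}"
  shows "{M'. admissible glued (path_vertices ! c) (path_vertices ! (c + 1)) M'
        \<and> boundary_state glued (path_vertices ! c) (path_vertices ! (c + 1)) M' = s'}
    = (\<Union>q. (\<lambda>M. M \<union> chosen q) ` {M. admissible E a b M
        \<and> compatible c (boundary_state E a b M) q \<and> next_state c (boundary_state E a b M) q = s'})"
    (is "?new = (\<Union>q. _ ` ?old q)")
proof (intro equalityI subsetI)
  fix M' assume "M' \<in> ?new"
  then have M': "admissible glued (path_vertices ! c) (path_vertices ! (c + 1)) M'"
    "boundary_state glued (path_vertices ! c) (path_vertices ! (c + 1)) M' = s'" by auto
  define q where "q = ({a, u1} \<in> M', {u1, u2} \<in> M', {u2, u3} \<in> M', {u3, u4} \<in> M', {u4, b} \<in> M')"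
  have split: "M' = (M' \<inter> E) \<union> chosen q"
    unfolding q_def by (rule decompose_glued[OF admissible_subset[OF M'(1)]])
  then have "M' \<inter> E \<in> ?old q"
    using glued_state_iff[OF c, of "M' \<inter> E" q s'] M' by auto
  with split show "M' \<in> (\<Union>q. (\<lambda>M. M \<union> chosen q) ` ?old q)" by blast
next
  fix M' assume "M' \<in> (\<Union>q. (\<lambda>M. M \<union> chosen q) ` ?old q)"
  then obtain q M where M': "M' = M \<union> chosen q" and M: "M \<in> ?old q" by blast
  then have "M \<subseteq> E" by (auto dest: admissible_subset)
  with M' M show "M' \<in> ?new"
    using glued_state_iff[OF c, of M q s'] by auto
qed

lemma card_Union_glued:
  assumes sub: "\<And>q. Ms q \<subseteq> Pow E"
  shows "card (\<Union>q. (\<lambda>M. M \<union> chosen q) ` Ms q) = (\<Sum>q\<in>UNIV. card (Ms q))"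
proof -
  have split: "M = (M \<union> chosen q) \<inter> E" "chosen q = (M \<union> chosen q) - E" if "M \<in> Ms q" for M q
    using sub[of q] that chosen_disjoint[of q] by blast+
  have "card (\<Union>q. (\<lambda>M. M \<union> chosen q) ` Ms q) = (\<Sum>q\<in>UNIV. card ((\<lambda>M. M \<union> chosen q) ` Ms q))"
  proof (rule card_UN_disjoint)
    show "\<forall>q\<in>UNIV. finite ((\<lambda>M. M \<union> chosen q) ` Ms q)"
      using sub finite_E by (meson finite_Pow_iff finite_imageI finite_subset)
    show "\<forall>q\<in>UNIV. \<forall>q'\<in>UNIV. q \<noteq> q' \<longrightarrow>
        (\<lambda>M. M \<union> chosen q) ` Ms q \<inter> (\<lambda>M. M \<union> chosen q') ` Ms q' = {}"
    proof (intro ballI impI equals0I)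
      fix q q' M' assume ne: "q \<noteq> q'"
        and "M' \<in> (\<lambda>M. M \<union> chosen q) ` Ms q \<inter> (\<lambda>M. M \<union> chosen q') ` Ms q'"
      then obtain M1 M2 where M1: "M1 \<in> Ms q" and M2: "M2 \<in> Ms q'"
        and eq: "M1 \<union> chosen q = M2 \<union> chosen q'" by blast
      have "chosen q = chosen q'" using split(2)[OF M1] split(2)[OF M2] eq by simp
      with ne chosen_inj show False by blast
    qed
  qed simp
  also have "\<dots> = (\<Sum>q\<in>UNIV. card (Ms q))"
  proof (rule sum.cong[OF refl], rule card_image, rule inj_onI)
    fix q M1 M2 assume "M1 \<in> Ms q" "M2 \<in> Ms q" "M1 \<union> chosen q = M2 \<union> chosen q"
    then show "M1 = M2" using split(1) by metis
  qed
  finally show ?thesis .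
qed

lemma state_count_glued:
  assumes c: "c \<in> {1, 2, 3}"
  shows "state_count glued (path_vertices ! c) (path_vertices ! (c + 1)) s'
    = (\<Sum>s | consistent s. transfer c s' s * state_count E a b s)"
proof -
  let ?P = "\<lambda>q s. compatible c s q \<and> next_state c s q = s'"
  let ?old = "\<lambda>q. {M. admissible E a b M \<and> ?P q (boundary_state E a b M)}"
  have "state_count glued (path_vertices ! c) (path_vertices ! (c + 1)) s'
      = card (\<Union>q. (\<lambda>M. M \<union> chosen q) ` ?old q)"
    unfolding state_count_def glued_states_eq[OF c] ..
  also have "\<dots> = (\<Sum>q\<in>UNIV. card (?old q))"
    by (rule card_Union_glued) (auto dest: admissible_subset)
  also have "\<dots> = (\<Sum>q\<in>UNIV. \<Sum>s | ?P q s. state_count E a b s)"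
  proof (rule sum.cong[OF refl])
    fix q
    show "card (?old q) = (\<Sum>s | ?P q s. state_count E a b s)"
      using card_admissible_by_state[OF finite_E, where R = "?P q"] by simp
  qed
  also have "\<dots> = (\<Sum>q\<in>UNIV. \<Sum>s\<in>UNIV. if ?P q s then state_count E a b s else 0)"
    by (simp add: sum.If_cases)
  also have "\<dots> = (\<Sum>s\<in>UNIV. transfer c s' s * state_count E a b s)"
    by (subst sum.swap) (simp add: transfer_def sum.If_cases)
  also have "\<dots> = (\<Sum>s | consistent s. transfer c s' s * state_count E a b s)"
    by (rule sum_restrict_consistent)
  finally show ?thesis .
qed
end

section \<open>Benzenoid chains\<close>

definition chain_code :: "(nat \<Rightarrow> nat) \<Rightarrow> bool" where
  "chain_code c \<longleftrightarrow> (\<forall>i. c i \<in> {1, 2, 3})"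

abbreviation "att_a c n \<equiv> fst (chain_att c n)"
abbreviation "att_b c n \<equiv> snd (chain_att c n)"

text \<open>The chain with \<open>n\<close> hexagons together with the edge onto which hexagon \<open>n\<close> will be
  glued; for \<open>n \<ge> 1\<close> that edge already lies on hexagon \<open>n - 1\<close>.\<close>

definition chain_graph :: "(nat \<Rightarrow> nat) \<Rightarrow> nat \<Rightarrow> nat set set" where
  "chain_graph c n = chain_edges c n \<union> {{att_a c n, att_b c n}}"

definition hex_path :: "(nat \<Rightarrow> nat) \<Rightarrow> nat \<Rightarrow> nat set set" where
  "hex_path c n = {{att_a c n, 4*n+2}, {4*n+2, 4*n+3}, {4*n+3, 4*n+4}, {4*n+4, 4*n+5}, {4*n+5, att_b c n}}"

definition chain_state_count :: "(nat \<Rightarrow> nat) \<Rightarrow> nat \<Rightarrow> boundary \<Rightarrow> nat" where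
  "chain_state_count c n = state_count (chain_graph c n) (att_a c n) (att_b c n)"

lemma hex_edges_eq: "hex_edges c n = hex_path c n \<union> {{att_a c n, att_b c n}}"
  unfolding hex_edges_def hex_path_def by (cases "chain_att c n") auto

lemma chain_edges_Suc: "chain_edges c (Suc n) = chain_edges c n \<union> hex_edges c n"
  unfolding chain_edges_def by (simp add: lessThan_Suc Un_commute)

lemma finite_chain_edges: "finite (chain_edges c n)"
  unfolding chain_edges_def by (rule finite_UN_I) (auto simp: hex_edges_eq hex_path_def)

lemma att_less:
  assumes "chain_code c"
  shows "att_a c n < 4*n+2 \<and> att_b c n < 4*n+2 \<and> att_a c n \<noteq> att_b c n"
proof (cases n)
  case (Suc i)
  have "c i \<in> {1, 2, 3}" using assms unfolding chain_code_def by blast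
  then have "c i \<le> 3" by auto
  with Suc show ?thesis by simp
qed simp

lemma chain_vertex_less:
  assumes "chain_code c" and "e \<in> chain_edges c n" and "x \<in> e"
  shows "x < 4*n+2"
proof -
  obtain i where i: "i < n" and e: "e \<in> hex_edges c i"
    using assms(2) unfolding chain_edges_def by blast
  have "att_a c i < 4*i+2" "att_b c i < 4*i+2" using att_less[OF assms(1)] by auto
  then have "x \<le> 4*i+5" using e assms(3) unfolding hex_edges_eq hex_path_def by auto
  with i show ?thesis by linarith
qed

lemma hexagon_gluing_chain:
  assumes "chain_code c"
  shows "hexagon_gluing (chain_graph c n) (att_a c n) (att_b c n) (4*n+2) (4*n+3) (4*n+4) (4*n+5)"
proof
  show "finite (chain_graph c n)" unfolding chain_graph_def using finite_chain_edges by simp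
  show "{att_a c n, att_b c n} \<in> chain_graph c n" unfolding chain_graph_def by simp
  show "distinct [att_a c n, att_b c n, 4*n+2, 4*n+3, 4*n+4, 4*n+5]"
    using att_less[OF assms, of n] by auto
  have less: "x < 4*n+2" if "x \<in> \<Union>(chain_graph c n)" for x
  proof -
    from that obtain e where e: "e \<in> chain_graph c n" "x \<in> e" by blast
    show ?thesis
    proof (cases "e \<in> chain_edges c n")
      case True
      then show ?thesis by (rule chain_vertex_less[OF assms _ e(2)])
    next
      case False
      then have "e = {att_a c n, att_b c n}" using e(1) unfolding chain_graph_def by blast
      then show ?thesis using e(2) att_less[OF assms, of n] by auto
    qed
  qed
  show "4*n+2 \<notin> \<Union>(chain_graph c n)" "4*n+3 \<notin> \<Union>(chain_graph c n)"
    "4*n+4 \<notin> \<Union>(chain_graph c n)" "4*n+5 \<notin> \<Union>(chain_graph c n)"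
    using less by fastforce+
qed

lemma next_att_in_hex_path:
  assumes "chain_code c"
  shows "{att_a c (Suc n), att_b c (Suc n)} \<in> hex_path c n"
proof -
  have "c n \<in> {1, 2, 3}" using assms unfolding chain_code_def by blast
  then consider "c n = 1" | "c n = 2" | "c n = 3" by blast
  then show ?thesis
  proof cases
    case 1
    then have "{att_a c (Suc n), att_b c (Suc n)} = {4*n+2, 4*n+3}" by (simp add: eval_nat_numeral)
    then show ?thesis unfolding hex_path_def by (simp only: insertI1 insertI2)
  next
    case 2
    then have "{att_a c (Suc n), att_b c (Suc n)} = {4*n+3, 4*n+4}" by (simp add: eval_nat_numeral)
    then show ?thesis unfolding hex_path_def by (simp only: insertI1 insertI2)
  next
    case 3
    then have "{att_a c (Suc n), att_b c (Suc n)} = {4*n+4, 4*n+5}" by (simp add: eval_nat_numeral)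
    then show ?thesis unfolding hex_path_def by (simp only: insertI1 insertI2)
  qed
qed

lemma chain_graph_Suc:
  assumes "chain_code c"
  shows "chain_graph c (Suc n) =
    hexagon_gluing.glued (chain_graph c n) (att_a c n) (att_b c n) (4*n+2) (4*n+3) (4*n+4) (4*n+5)"
proof -
  have "chain_graph c (Suc n) = chain_edges c n \<union> hex_edges c n"
    unfolding chain_graph_def chain_edges_Suc hex_edges_eq
    using next_att_in_hex_path[OF assms, of n] by blast
  also have "\<dots> = chain_graph c n \<union> hex_path c n"
    unfolding chain_graph_def hex_edges_eq by blast
  finally show ?thesis
    unfolding hexagon_gluing.glued_def[OF hexagon_gluing_chain[OF assms]]
      hexagon_gluing.path_edges_def[OF hexagon_gluing_chain[OF assms]] hex_path_def .
qed

lemma path_vertices_att: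
  fixes c :: "nat \<Rightarrow> nat" and n :: nat
  assumes "chain_code c"
  defines "pv \<equiv> hexagon_gluing.path_vertices (att_a c n) (att_b c n) (4*n+2) (4*n+3) (4*n+4) (4*n+5)"
  shows "pv ! c n = att_a c (Suc n)" "pv ! (c n + 1) = att_b c (Suc n)"
proof -
  have "c n = 1 \<or> c n = 2 \<or> c n = 3" using assms(1) unfolding chain_code_def by blast
  then show "pv ! c n = att_a c (Suc n)" "pv ! (c n + 1) = att_b c (Suc n)"
    unfolding pv_def hexagon_gluing.path_vertices_def[OF hexagon_gluing_chain[OF assms(1)]]
    by (elim disjE; simp)+
qed

lemma chain_state_count_Suc:
  assumes "chain_code c"
  shows "chain_state_count c (Suc n) s' =
    (\<Sum>s | consistent s. transfer (c n) s' s * chain_state_count c n s)"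
proof -
  have "c n \<in> {1, 2, 3}" using assms unfolding chain_code_def by blast
  from hexagon_gluing.state_count_glued[OF hexagon_gluing_chain[OF assms] this, of n s']
  show ?thesis
    unfolding chain_state_count_def chain_graph_Suc[OF assms] path_vertices_att[OF assms] .
qed

lemma chain_state_count_0:
  "chain_state_count c 0 s = (if s = (False, False, False, False) \<or> s = (True, True, False, False) then 1 else 0)"
proof -
  have graph: "chain_graph c 0 = {{0, 1}}" unfolding chain_graph_def chain_edges_def by simp
  have admissible: "admissible {{0 :: nat, 1}} 0 1 M \<longleftrightarrow> M = {} \<or> M = {{0, 1}}" for M
    unfolding admissible_def matching_def by auto
  have "boundary_state {{0 :: nat, 1}} 0 1 {} = (False, False, False, False)"
    "boundary_state {{0 :: nat, 1}} 0 1 {{0, 1}} = (True, True, False, False)"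
    unfolding boundary_state_def by auto
  then have "{M. admissible {{0 :: nat, 1}} 0 1 M \<and> boundary_state {{0, 1}} 0 1 M = s} =
      (if s = (False, False, False, False) then {{}} else {})
      \<union> (if s = (True, True, False, False) then {{{0, 1}}} else {})"
    unfolding admissible by auto
  then show ?thesis unfolding chain_state_count_def graph state_count_def by auto
qed

lemma sum_final_chain_state_count:
  assumes "chain_code c"
  shows "(\<Sum>s | final s. chain_state_count c n s) = (if n = 0 then 1 else Psi (chain_edges c n))"
proof (cases n)
  case 0
  have "{s. final s} = {(True, True, False, False), (True, False, False, False), (False, True, False, False)}"
    by auto
  with 0 show ?thesis by (simp add: chain_state_count_0)
next
  case (Suc m)
  have graph: "chain_graph c n = chain_edges c n"
    using next_att_in_hex_path[OF assms, of m]
    unfolding Suc chain_graph_def chain_edges_Suc hex_edges_eq by blast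
  have nonempty: "\<forall>e\<in>chain_edges c n. e \<noteq> {}"
    unfolding chain_edges_def hex_edges_eq hex_path_def by auto
  have ab: "{att_a c n, att_b c n} \<in> chain_edges c n"
    using graph unfolding chain_graph_def by blast
  have "Psi (chain_edges c n) = (\<Sum>s | final s. state_count (chain_edges c n) (att_a c n) (att_b c n) s)"
    by (rule Psi_eq_sum_final[OF finite_chain_edges ab nonempty])
  with Suc show ?thesis unfolding chain_state_count_def graph by simp
qed

section \<open>Linear recurrences from a transfer matrix\<close>

lemma kernel_iterates_annihilated:
  fixes x :: "nat \<Rightarrow> 'a \<Rightarrow> 'b::comm_ring_1"
  assumes step: "\<And>n s'. s' \<in> S \<Longrightarrow> x (Suc n) s' = (\<Sum>s\<in>S. K s' s * x n s)"
    and base: "\<And>s. s \<in> S \<Longrightarrow> (\<Sum>j\<le>k. d j * x (k - j) s) = 0"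
    and "s \<in> S"
  shows "(\<Sum>j\<le>k. d j * x (m + k - j) s) = 0"
  using \<open>s \<in> S\<close>
proof (induction m arbitrary: s)
  case 0
  then show ?case using base by simp
next
  case (Suc m)
  have "(\<Sum>j\<le>k. d j * x (Suc m + k - j) s) = (\<Sum>j\<le>k. d j * (\<Sum>t\<in>S. K s t * x (m + k - j) t))"
    using step[OF Suc.prems] by (intro sum.cong) (simp_all add: Suc_diff_le)
  also have "\<dots> = (\<Sum>t\<in>S. K s t * (\<Sum>j\<le>k. d j * x (m + k - j) t))"
    by (simp add: sum_distrib_left mult.left_commute sum.swap[where A = "{..k}"])
  also have "\<dots> = 0" using Suc.IH by simp
  finally show ?case .
qed

lemma fps_eq_quotient_of_recurrence:
  fixes a :: "nat \<Rightarrow> 'a::field" and N D :: "'a poly"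
  assumes D0: "coeff D 0 \<noteq> 0"
    and D_high: "\<And>j. k < j \<Longrightarrow> coeff D j = 0" and N_high: "\<And>n. k \<le> n \<Longrightarrow> coeff N n = 0"
    and rec: "\<And>m. (\<Sum>j\<le>k. coeff D j * a (m + k - j)) = 0"
    and init: "\<And>n. n < k \<Longrightarrow> (\<Sum>j\<le>n. coeff D j * a (n - j)) = coeff N n"
  shows "Abs_fps a = fps_of_poly N / fps_of_poly D"
proof -
  have "fps_of_poly D * Abs_fps a = fps_of_poly N"
  proof (rule fps_ext)
    fix n
    have prod: "(fps_of_poly D * Abs_fps a) $ n = (\<Sum>j\<le>n. coeff D j * a (n - j))"
      by (simp add: fps_mult_nth atLeast0AtMost)
    show "(fps_of_poly D * Abs_fps a) $ n = fps_of_poly N $ n"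
    proof (cases "n < k")
      case True
      then show ?thesis using init prod by simp
    next
      case False
      then obtain m where n: "n = m + k" by (metis add.commute le_add_diff_inverse not_less)
      have "(\<Sum>j\<le>n. coeff D j * a (n - j)) = (\<Sum>j\<le>k. coeff D j * a (n - j))"
        by (rule sum.mono_neutral_right) (auto simp: n D_high)
      then show ?thesis using prod rec[of m] n N_high by simp
    qed
  qed
  then have prod: "Abs_fps a * fps_of_poly D = fps_of_poly N" by (simp add: mult.commute)
  have unit: "fps_of_poly D $ 0 \<noteq> 0" using D0 by simp
  have "fps_of_poly N / fps_of_poly D = Abs_fps a * (fps_of_poly D * inverse (fps_of_poly D))"
    unfolding prod[symmetric] fps_divide_unit[OF unit] by (simp add: mult.assoc)
  then show ?thesis using inverse_mult_eq_1'[OF unit] by simp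
qed

definition consistent_states :: "boundary list" where
  "consistent_states =
    [(False, False, False, False), (False, False, False, True), (False, False, True, False),
     (False, False, True, True), (False, True, False, False), (False, True, True, False),
     (True, False, False, False), (True, False, False, True), (True, True, False, False)]"

lemma set_consistent_states: "set consistent_states = {s. consistent s}"
proof (rule set_eqI)
  fix s :: boundary
  show "s \<in> set consistent_states \<longleftrightarrow> s \<in> {s. consistent s}"
    by (cases s) (auto simp: consistent_states_def)
qed

lemma distinct_consistent_states: "distinct consistent_states"
  by (simp add: consistent_states_def)

lemma final_imp_consistent: "final s \<Longrightarrow> consistent s"
  by (cases s) auto

lemma sum_consistent_eq_sum_list: "(\<Sum>s | consistent s. f s) = sum_list (map f consistent_states)"
  using sum_list_distinct_conv_sum_set[OF distinct_consistent_states, of f]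
  unfolding set_consistent_states by simp

definition mat_vec :: "int list list \<Rightarrow> int list \<Rightarrow> int list" where
  "mat_vec A v = map (\<lambda>row. sum_list (map2 (*) row v)) A"

definition kernel_matrix :: "(boundary \<Rightarrow> boundary \<Rightarrow> nat) \<Rightarrow> int list list" where
  "kernel_matrix K = map (\<lambda>s'. map (\<lambda>s. int (K s' s)) consistent_states) consistent_states"

definition final_total :: "int list \<Rightarrow> int" where
  "final_total v = sum_list (map snd (filter (final \<circ> fst) (zip consistent_states v)))"

lemma kernel_step_map:
  assumes "\<And>s'. consistent s' \<Longrightarrow> y s' = (\<Sum>s | consistent s. K s' s * v s)"
  shows "map (\<lambda>s. int (y s)) consistent_states
    = mat_vec (kernel_matrix K) (map (\<lambda>s. int (v s)) consistent_states)"
  unfolding mat_vec_def kernel_matrix_def map_map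
proof (rule map_cong[OF refl])
  fix s' assume "s' \<in> set consistent_states"
  then have "int (y s') = (\<Sum>s | consistent s. int (K s' s) * int (v s))"
    using assms unfolding set_consistent_states by simp
  then show "int (y s') = ((\<lambda>row. sum_list (map2 (*) row (map (\<lambda>s. int (v s)) consistent_states)))
      \<circ> (\<lambda>s'. map (\<lambda>s. int (K s' s)) consistent_states)) s'"
    by (simp add: map2_map_map sum_consistent_eq_sum_list)
qed

lemma kernel_iterates_map:
  assumes "\<And>n s'. consistent s' \<Longrightarrow> x (Suc n) s' = (\<Sum>s | consistent s. K s' s * x n s)"
  shows "map (\<lambda>s. int (x n s)) consistent_states
    = (mat_vec (kernel_matrix K) ^^ n) (map (\<lambda>s. int (x 0 s)) consistent_states)"
  by (induction n) (simp_all add: kernel_step_map[OF assms])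

lemma sum_final_eq_final_total: "(\<Sum>s | final s. y s) = final_total (map y consistent_states)"
proof -
  have "set (filter final consistent_states) = {s. final s}"
    using final_imp_consistent by (auto simp: set_consistent_states)
  then have "(\<Sum>s | final s. y s) = sum_list (map y (filter final consistent_states))"
    using sum_list_distinct_conv_sum_set[of "filter final consistent_states" y] distinct_consistent_states
    by simp
  also have "\<dots> = final_total (map y consistent_states)"
    unfolding final_total_def zip_map2 zip_same_conv_map by (simp add: filter_map comp_def)
  finally show ?thesis .
qed

fun iterates :: "('a \<Rightarrow> 'a) \<Rightarrow> 'a \<Rightarrow> nat \<Rightarrow> 'a list" where
  "iterates f v 0 = [v]"
| "iterates f v (Suc n) = v # iterates f (f v) n"

lemma nth_iterates: "m \<le> n \<Longrightarrow> iterates f v n ! m = (f ^^ m) v"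
proof (induction n arbitrary: v m)
  case (Suc n)
  then show ?case by (cases m) (simp_all add: funpow_swap1)
qed simp

lemma kernel_vectors:
  assumes step: "\<And>n s'. consistent s' \<Longrightarrow> x (Suc n) s' = (\<Sum>s | consistent s. K s' s * x n s)"
    and vectors: "iterates (mat_vec (kernel_matrix K)) (map (\<lambda>s. int (x 0 s)) consistent_states) k = vs"
    and "n \<le> k"
  shows "map (\<lambda>s. int (x n s)) consistent_states = vs ! n"
  unfolding vectors[symmetric] nth_iterates[OF \<open>n \<le> k\<close>]
  by (rule kernel_iterates_map[where x = x and K = K, OF step])

lemma kernel_counts_annihilated:
  fixes x :: "nat \<Rightarrow> boundary \<Rightarrow> nat" and ds :: "int list"
  assumes step: "\<And>n s'. consistent s' \<Longrightarrow> x (Suc n) s' = (\<Sum>s | consistent s. K s' s * x n s)"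
    and vectors: "iterates (mat_vec (kernel_matrix K)) (map (\<lambda>s. int (x 0 s)) consistent_states) k = vs"
    and annihilated:
      "\<forall>i < length consistent_states. (\<Sum>j\<le>k. nth_default 0 ds j * vs ! (k - j) ! i) = 0"
    and "consistent s"
  shows "(\<Sum>j\<le>k. of_int (nth_default 0 ds j) * of_nat (x (m + k - j) s)) = (0 :: rat)"
proof (rule kernel_iterates_annihilated[where x = "\<lambda>n s. of_nat (x n s)" and S = "{s. consistent s}"])
  fix t :: boundary assume "t \<in> {s. consistent s}"
  then have "t \<in> set consistent_states" using set_consistent_states by simp
  then obtain i where i: "i < length consistent_states" "consistent_states ! i = t"
    by (auto simp: in_set_conv_nth)
  have "int (x (k - j) t) = vs ! (k - j) ! i" for j
    using i kernel_vectors[OF step vectors, of "k - j"] by (metis (no_types, lifting) diff_le_self nth_map)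
  then have "(\<Sum>j\<le>k. nth_default 0 ds j * int (x (k - j) t)) = 0" using annihilated i(1) by simp
  then have "(of_int (\<Sum>j\<le>k. nth_default 0 ds j * int (x (k - j) t)) :: rat) = 0" by simp
  then show "(\<Sum>j\<le>k. of_int (nth_default 0 ds j) * of_nat (x (k - j) t)) = (0 :: rat)" by simp
qed (use \<open>consistent s\<close> step in simp_all)

lemma coeff_Poly_of_int: "coeff (Poly (map of_int xs)) n = of_int (nth_default 0 xs n)"
  by (simp add: nth_default_map_eq)

text \<open>Apart from \<open>step\<close>, the hypotheses are closed computations on integer lists: \<open>ds\<close> and
  \<open>ns\<close> are the coefficient lists of denominator and numerator, and \<open>vs\<close> lists the first
  \<open>k + 1\<close> count vectors.\<close>

lemma fps_of_kernel_iterates: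
  fixes x :: "nat \<Rightarrow> boundary \<Rightarrow> nat" and ds ns :: "int list"
  assumes step: "\<And>n s'. consistent s' \<Longrightarrow> x (Suc n) s' = (\<Sum>s | consistent s. K s' s * x n s)"
    and lengths: "length ds \<le> Suc k" "length ns \<le> k" and lead: "nth_default 0 ds 0 \<noteq> 0"
    and vectors: "iterates (mat_vec (kernel_matrix K)) (map (\<lambda>s. int (x 0 s)) consistent_states) k = vs"
    and annihilated:
      "\<forall>i < length consistent_states. (\<Sum>j\<le>k. nth_default 0 ds j * vs ! (k - j) ! i) = 0"
    and initial:
      "\<forall>n < k. (\<Sum>j\<le>n. nth_default 0 ds j * final_total (vs ! (n - j))) = nth_default 0 ns n"
  shows "Abs_fps (\<lambda>n. of_nat (\<Sum>s | final s. x n s) :: rat)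
    = fps_of_poly (Poly (map of_int ns)) / fps_of_poly (Poly (map of_int ds))"
proof (rule fps_eq_quotient_of_recurrence[where k = k])
  show "coeff (Poly (map of_int ds)) 0 \<noteq> (0 :: rat)" using lead unfolding coeff_Poly_of_int by simp
  show "coeff (Poly (map of_int ds)) j = (0 :: rat)" if "k < j" for j
    using lengths(1) that unfolding coeff_Poly_of_int by (simp add: nth_default_beyond)
  show "coeff (Poly (map of_int ns)) n = (0 :: rat)" if "k \<le> n" for n
    using lengths(2) that unfolding coeff_Poly_of_int by (simp add: nth_default_beyond)
  show "(\<Sum>j\<le>k. coeff (Poly (map of_int ds)) j * of_nat (\<Sum>s | final s. x (m + k - j) s)) = (0 :: rat)"
    for m
  proof -
    have "(\<Sum>s | final s. \<Sum>j\<le>k. of_int (nth_default 0 ds j) * of_nat (x (m + k - j) s)) = (0 :: rat)"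
      using kernel_counts_annihilated[OF step vectors annihilated final_imp_consistent]
      by (intro sum.neutral) simp
    then show ?thesis unfolding coeff_Poly_of_int
      by (simp add: sum_distrib_left sum.swap[where B = "{s. final s}"])
  qed
next
  fix n assume "n < k"
  then have "(\<Sum>j\<le>n. nth_default 0 ds j * int (\<Sum>s | final s. x (n - j) s)) = nth_default 0 ns n"
    using initial kernel_vectors[OF step vectors]
    by (simp add: of_nat_sum sum_final_eq_final_total)
  then have "(of_int (\<Sum>j\<le>n. nth_default 0 ds j * int (\<Sum>s | final s. x (n - j) s)) :: rat)
      = of_int (nth_default 0 ns n)" by simp
  then show "(\<Sum>j\<le>n. coeff (Poly (map of_int ds)) j * of_nat (\<Sum>s | final s. x (n - j) s))
      = (coeff (Poly (map of_int ns)) n :: rat)"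
    unfolding coeff_Poly_of_int by simp
qed

section \<open>The three chains\<close>

fun swap_ends :: "boundary \<Rightarrow> boundary" where
  "swap_ends (al, be, da, db) = (be, al, db, da)"

lemma swap_ends_swap_ends [simp]: "swap_ends (swap_ends s) = s"
  by (cases s) simp

lemma consistent_swap_ends [simp]: "consistent (swap_ends s) = consistent s"
  by (cases s) auto

lemma final_swap_ends [simp]: "final (swap_ends s) = final s"
  by (cases s) auto

lemma sum_swap_ends:
  assumes "\<And>s. P (swap_ends s) = P s"
  shows "(\<Sum>s | P s. f (swap_ends s)) = (\<Sum>s | P s. f s)"
  by (rule sum.reindex_bij_witness[where i = swap_ends and j = swap_ends]) (auto simp: assms)

lemma transfer_matrix_straight:
  "kernel_matrix (transfer 2) =
    [[1, 1, 1, 1, 0, 0, 0, 0, 0],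
     [0, 0, 0, 0, 1, 1, 0, 0, 0],
     [0, 0, 0, 0, 0, 0, 1, 1, 0],
     [0, 0, 0, 0, 0, 0, 0, 0, 1],
     [1, 0, 1, 0, 1, 1, 0, 0, 0],
     [0, 0, 0, 0, 0, 0, 1, 0, 1],
     [1, 1, 0, 0, 0, 0, 1, 1, 0],
     [0, 0, 0, 0, 1, 0, 0, 0, 1],
     [1, 1, 1, 1, 2, 1, 2, 1, 2]]"
  by code_simp

lemma transfer_matrix_kinked:
  "kernel_matrix (transfer 1) =
    [[0, 0, 0, 0, 0, 0, 1, 0, 1],
     [0, 0, 0, 0, 0, 0, 1, 1, 0],
     [0, 0, 0, 0, 1, 0, 0, 0, 0],
     [1, 1, 0, 0, 0, 0, 0, 0, 0],
     [0, 0, 0, 0, 0, 0, 1, 1, 1],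
     [1, 1, 0, 0, 1, 0, 0, 0, 0],
     [1, 0, 1, 0, 1, 1, 0, 0, 0],
     [1, 1, 1, 1, 0, 0, 0, 0, 0],
     [2, 2, 1, 1, 2, 1, 2, 1, 1]]"
  by code_simp

lemma transfer_matrix_kinked_swapped:
  "kernel_matrix (\<lambda>s' s. transfer 1 (swap_ends s') s) =
    [[0, 0, 0, 0, 0, 0, 1, 0, 1],
     [0, 0, 0, 0, 1, 0, 0, 0, 0],
     [0, 0, 0, 0, 0, 0, 1, 1, 0],
     [1, 1, 0, 0, 0, 0, 0, 0, 0],
     [1, 0, 1, 0, 1, 1, 0, 0, 0],
     [1, 1, 1, 1, 0, 0, 0, 0, 0],
     [0, 0, 0, 0, 0, 0, 1, 1, 1],
     [1, 1, 0, 0, 1, 0, 0, 0, 0],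
     [2, 2, 1, 1, 2, 1, 2, 1, 1]]"
  by code_simp

lemma transfer_mirror: "transfer 3 s' s = transfer 1 (swap_ends s') (swap_ends s)"
proof -
  have "\<forall>s' s. transfer 3 s' s = transfer 1 (swap_ends s') (swap_ends s)" by code_simp
  then show ?thesis by blast
qed

lemma initial_state_counts:
  "map (\<lambda>s. int (chain_state_count c 0 s)) consistent_states = [1, 0, 0, 0, 0, 0, 0, 0, 1]"
  by (simp add: chain_state_count_0 consistent_states_def)

lemma polyacene_gf:
  "Abs_fps (\<lambda>n. of_nat (ell n) :: rat) = fps_of_poly [:1, 1, 0, -1:] / fps_of_poly [:1, -4, 0, 0, -1, -1:]"
proof -
  have "ell n = (\<Sum>s | final s. chain_state_count (\<lambda>_. 2) n s)" for n
    using sum_final_chain_state_count[of "\<lambda>_. 2" n] by (simp add: ell_def polyacene_def chain_code_def)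
  then have ell: "(\<lambda>n. of_nat (ell n) :: rat) = (\<lambda>n. of_nat (\<Sum>s | final s. chain_state_count (\<lambda>_. 2) n s))"
    by simp
  have polys: "[:1, 1, 0, -1:] = (Poly (map of_int [1, 1, 0, -1]) :: rat poly)"
    "[:1, -4, 0, 0, -1, -1:] = (Poly (map of_int [1, -4, 0, 0, -1, -1]) :: rat poly)" by simp_all
  show ?thesis unfolding ell polys
  proof (rule fps_of_kernel_iterates[where K = "transfer 2" and k = 5 and vs =
      "[[1, 0, 0, 0, 0, 0, 0, 0, 1],
        [1, 0, 0, 1, 1, 1, 1, 1, 3],
        [2, 2, 2, 3, 3, 4, 3, 4, 14],
        [9, 7, 7, 14, 11, 17, 11, 17, 57],
        [37, 28, 28, 57, 44, 68, 44, 68, 229],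
        [150, 112, 112, 229, 177, 273, 177, 273, 920]]"])
    show "chain_state_count (\<lambda>_. 2) (Suc n) s' =
        (\<Sum>s | consistent s. transfer 2 s' s * chain_state_count (\<lambda>_. 2) n s)" for n s'
      using chain_state_count_Suc[of "\<lambda>_. 2"] by (simp add: chain_code_def)
  qed ((unfold transfer_matrix_straight initial_state_counts)?, code_simp)+
qed

lemma helicene_gf:
  "Abs_fps (\<lambda>n. of_nat (hh n) :: rat)
    = fps_of_poly [:1, 4, 8, 8, 7, 4, 2:] / fps_of_poly [:1, -1, -7, -12, -6, -7, -4, -2:]"
proof -
  have "hh n = (\<Sum>s | final s. chain_state_count (\<lambda>_. 1) n s)" for n
    using sum_final_chain_state_count[of "\<lambda>_. 1" n] by (simp add: hh_def helicene_def chain_code_def)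
  then have hh: "(\<lambda>n. of_nat (hh n) :: rat) = (\<lambda>n. of_nat (\<Sum>s | final s. chain_state_count (\<lambda>_. 1) n s))"
    by simp
  have polys: "[:1, 4, 8, 8, 7, 4, 2:] = (Poly (map of_int [1, 4, 8, 8, 7, 4, 2]) :: rat poly)"
    "[:1, -1, -7, -12, -6, -7, -4, -2:] = (Poly (map of_int [1, -1, -7, -12, -6, -7, -4, -2]) :: rat poly)"
    by simp_all
  show ?thesis unfolding hh polys
  proof (rule fps_of_kernel_iterates[where K = "transfer 1" and k = 7 and vs =
      "[[1, 0, 0, 0, 0, 0, 0, 0, 1],
        [1, 0, 0, 1, 1, 1, 1, 1, 3],
        [4, 2, 1, 1, 5, 2, 3, 2, 12],
        [15, 5, 5, 6, 17, 11, 12, 8, 46],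
        [58, 20, 17, 20, 66, 37, 48, 31, 174],
        [222, 79, 66, 78, 253, 144, 178, 115, 663],
        [841, 293, 253, 301, 956, 554, 685, 445, 2530],
        [3215, 1130, 956, 1134, 3660, 2090, 2604, 1688, 9633]]"])
    show "chain_state_count (\<lambda>_. 1) (Suc n) s' =
        (\<Sum>s | consistent s. transfer 1 s' s * chain_state_count (\<lambda>_. 1) n s)" for n s'
      using chain_state_count_Suc[of "\<lambda>_. 1"] by (simp add: chain_code_def)
  qed ((unfold transfer_matrix_kinked initial_state_counts)?, code_simp)+
qed

abbreviation "zigzag_code \<equiv> \<lambda>i :: nat. if even i then 1 else 3 :: nat"

text \<open>Reading the states of the odd-length zig-zag chains with the ends \<open>a\<close>, \<open>b\<close> exchanged turns
  the alternating kinks into one and the same transfer step.\<close>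

definition zigzag_counts :: "nat \<Rightarrow> boundary \<Rightarrow> nat" where
  "zigzag_counts n s = chain_state_count zigzag_code n (if even n then s else swap_ends s)"

lemma zigzag_counts_Suc:
  "zigzag_counts (Suc n) s' = (\<Sum>s | consistent s. transfer 1 (swap_ends s') s * zigzag_counts n s)"
proof -
  have step: "chain_state_count zigzag_code (Suc n) t =
      (\<Sum>s | consistent s. transfer (zigzag_code n) t s * chain_state_count zigzag_code n s)" for t
    by (rule chain_state_count_Suc) (simp add: chain_code_def)
  show ?thesis
  proof (cases "even n")
    case True
    then show ?thesis using step[of "swap_ends s'"] by (simp add: zigzag_counts_def)
  next
    case False
    then have "zigzag_counts (Suc n) s'
        = (\<Sum>s | consistent s. transfer 3 s' (swap_ends s) * chain_state_count zigzag_code n (swap_ends s))"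
      using step[of s'] sum_swap_ends[of consistent, symmetric] by (simp add: zigzag_counts_def)
    also have "\<dots> = (\<Sum>s | consistent s. transfer 1 (swap_ends s') s * zigzag_counts n s)"
      using False by (simp add: transfer_mirror zigzag_counts_def)
    finally show ?thesis .
  qed
qed

lemma sum_final_zigzag_counts:
  "(\<Sum>s | final s. zigzag_counts n s) = (\<Sum>s | final s. chain_state_count zigzag_code n s)"
  by (cases "even n") (simp_all add: zigzag_counts_def sum_swap_ends)

lemma zigzag_gf:
  "Abs_fps (\<lambda>n. of_nat (zz n) :: rat)
    = fps_of_poly [:1, 2, 4, 4, 6, 4, 1:] / fps_of_poly [:1, -3, -1, -6, -7, -7, -5, -1:]"
proof -
  have "zz n = (\<Sum>s | final s. zigzag_counts n s)" for n
    using sum_final_chain_state_count[of zigzag_code n]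
    by (simp add: zz_def zigzag_def chain_code_def sum_final_zigzag_counts)
  then have zz: "(\<lambda>n. of_nat (zz n) :: rat) = (\<lambda>n. of_nat (\<Sum>s | final s. zigzag_counts n s))"
    by simp
  have polys: "[:1, 2, 4, 4, 6, 4, 1:] = (Poly (map of_int [1, 2, 4, 4, 6, 4, 1]) :: rat poly)"
    "[:1, -3, -1, -6, -7, -7, -5, -1:] = (Poly (map of_int [1, -3, -1, -6, -7, -7, -5, -1]) :: rat poly)"
    by simp_all
  have initial: "map (\<lambda>s. int (zigzag_counts 0 s)) consistent_states = [1, 0, 0, 0, 0, 0, 0, 0, 1]"
    using initial_state_counts[of zigzag_code] by (simp add: zigzag_counts_def)
  show ?thesis unfolding zz polys
  proof (rule fps_of_kernel_iterates[where K = "\<lambda>s' s. transfer 1 (swap_ends s') s" and k = 8 and vs =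
      "[[1, 0, 0, 0, 0, 0, 0, 0, 1],
        [1, 0, 0, 1, 1, 1, 1, 1, 3],
        [4, 1, 2, 1, 3, 2, 5, 2, 12],
        [17, 3, 7, 5, 11, 8, 19, 8, 45],
        [64, 11, 27, 20, 43, 32, 72, 31, 173],
        [245, 43, 103, 75, 166, 122, 276, 118, 663],
        [939, 166, 394, 288, 636, 466, 1057, 454, 2541],
        [3598, 636, 1511, 1105, 2435, 1787, 4052, 1741, 9739],
        [13791, 2435, 5793, 4234, 9331, 6850, 15532, 6669, 37325]]"])
    show "zigzag_counts (Suc n) s' =
        (\<Sum>s | consistent s. transfer 1 (swap_ends s') s * zigzag_counts n s)" for n s'
      by (rule zigzag_counts_Suc)
  qed ((unfold transfer_matrix_kinked_swapped initial)?, code_simp)+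
qed

theorem theorem4p4:
  shows "Abs_fps (\<lambda>n. of_nat (ell n) :: rat)
           = fps_of_poly [:1, 1, 0, -1:] / fps_of_poly [:1, -4, 0, 0, -1, -1:] \<and>
         Abs_fps (\<lambda>n. of_nat (zz n) :: rat)
           = fps_of_poly [:1, 2, 4, 4, 6, 4, 1:] / fps_of_poly [:1, -3, -1, -6, -7, -7, -5, -1:] \<and>
         Abs_fps (\<lambda>n. of_nat (hh n) :: rat)
           = fps_of_poly [:1, 4, 8, 8, 7, 4, 2:] / fps_of_poly [:1, -1, -7, -12, -6, -7, -4, -2:]"
  using polyacene_gf zigzag_gf helicene_gf by blast

end
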